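(* Let $T\in\mathbb R^{m\times n}$ be injective and satisfy the positive cone condition, and let $y\in\mathbb R^m$. Let $0<\mu<\lambda$ and suppose $N(\lambda)\subset N(\mu)$ and $\xi_\lambda^i=\xi_\mu^i$ for all $i\in I(\lambda)$. Then $$x_\mu^i\,\mathrm{sign}(x_\lambda^i)\le|x_\lambda^i|\qquad\text{for all }i\in I(\lambda).$$
   Context: For $\lambda>0$, $x_\lambda$ is the unique minimizer of $x\mapsto\frac{\lambda}{2}\|Tx-y\|_2^2+\|x\|_1$ on $\mathbb R^n$, and $\xi_\lambda:=\lambda T^{T}(y-Tx_\lambda)$, which satisfies $\xi_\lambda^i\in[-1,1]$ and $\xi_\lambda^i=\mathrm{sign}(x_\lambda^i)$ when $x_\lambda^i\ne0$. $N(\lambda)=\{i:x_\lambda^i=0\}$, $I(\lambda)=\{i:x_\lambda^i\ne0\}$. Positive cone condition: for every nonempty $J\subset\{1,\dots,n\}$, letting $T^J$ be the submatrix of $T$ consisting of the columns indexed by $J$ and $S_J=((T^J)^{T}T^J)^{-1}$, one has $(S_J)_{i,i}-\sum_{j\ne i}|(S_J)_{i,j}|\ge0$ for all $i\in J$ (equivalently, $(T^TT)^{-1}$ is diagonally dominant in this sense). *)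

theory Defs
  imports "HOL-Analysis.Analysis"
begin

definition lasso_obj :: "real^'n^'m \<Rightarrow> real^'m \<Rightarrow> real \<Rightarrow> real^'n \<Rightarrow> real" where
  "lasso_obj T y lam x = lam / 2 * (norm (T *v x - y))\<^sup>2 + (\<Sum>i\<in>UNIV. \<bar>x $ i\<bar>)"

definition lasso_min :: "real^'n^'m \<Rightarrow> real^'m \<Rightarrow> real \<Rightarrow> real^'n" where
  "lasso_min T y lam = (THE x. \<forall>z. lasso_obj T y lam x \<le> lasso_obj T y lam z)"

definition lasso_xi :: "real^'n^'m \<Rightarrow> real^'m \<Rightarrow> real \<Rightarrow> real^'n" where
  "lasso_xi T y lam = lam *\<^sub>R (transpose T *v (y - T *v lasso_min T y lam))"

text \<open>S is the inverse of the Gram matrix (T^J)^T T^J of the columns indexed by J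
  (entries of S indexed by J; entry (i,j) of (T^J)^T T^J is column i dot column j).\<close>
definition gram_inverse_on :: "real^'n^'m \<Rightarrow> 'n set \<Rightarrow> ('n \<Rightarrow> 'n \<Rightarrow> real) \<Rightarrow> bool" where
  "gram_inverse_on T J S \<longleftrightarrow>
     (\<forall>i\<in>J. \<forall>j\<in>J. (\<Sum>k\<in>J. (column i T \<bullet> column k T) * S k j) = (if i = j then 1 else 0))"

definition positive_cone_condition :: "real^'n^'m \<Rightarrow> bool" where
  "positive_cone_condition T \<longleftrightarrow>
     (\<forall>J. J \<noteq> {} \<longrightarrow> (\<forall>S. gram_inverse_on T J S \<longrightarrow>
        (\<forall>i\<in>J. S i i - (\<Sum>j\<in>J - {i}. \<bar>S i j\<bar>) \<ge> 0)))"

end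

theory Submission imports Defs begin

text \<open>Write \<open>I = I(\<lambda>)\<close>, \<open>s = sign x\<^sub>\<lambda>\<close> and \<open>d = x\<^sub>\<lambda> - x\<^sub>\<mu>\<close>. The first-order condition of the
  lasso at a nonzero coordinate is \<open>\<xi>\<^sup>i = s\<^sub>i\<close>; since \<open>\<xi>\<^sub>\<lambda>\<close> and \<open>\<xi>\<^sub>\<mu>\<close> agree on \<open>I\<close>, this gives
  \<open>(T\<^sup>T T d)\<^sub>i = (1/\<mu> - 1/\<lambda>) s\<^sub>i\<close> for \<open>i \<in> I\<close>. As \<open>N(\<lambda>) \<subseteq> N(\<mu>)\<close>, \<open>d\<close> is supported on \<open>I\<close>, so
  injectivity of \<open>T\<close> forces \<open>d\<^sub>I = (1/\<mu> - 1/\<lambda>) S\<^sub>I s\<^sub>I\<close> with \<open>S\<^sub>I\<close> the inverse Gram matrix of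
  the columns in \<open>I\<close>. Diagonal dominance of \<open>S\<^sub>I\<close> then yields \<open>s\<^sub>i d\<^sub>i \<ge> 0\<close>, which is the claim.\<close>

lemma column_inner_matrix_vector_mult:
  fixes T :: "real^'n^'m"
  shows "column i T \<bullet> (T *v v) = (\<Sum>k\<in>UNIV. v $ k * (column i T \<bullet> column k T))"
  unfolding matrix_mult_sum by (simp add: inner_sum_right scalar_mult_eq_scaleR)

lemma transpose_matrix_vector_mult_component:
  fixes T :: "real^'n^'m"
  shows "(transpose T *v w) $ i = column i T \<bullet> w"
  by (simp add: matrix_vector_mult_def transpose_def column_def inner_vec_def mult.commute)

lemma eq_0_if_supported_and_orthogonal_columns:
  fixes T :: "real^'n^'m"
  assumes inj: "inj (\<lambda>x. T *v x)"
    and supp: "\<forall>k. k \<notin> I \<longrightarrow> v $ k = 0"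
    and orth: "\<forall>i\<in>I. column i T \<bullet> (T *v v) = 0"
  shows "v = 0"
proof -
  have "(T *v v) \<bullet> (T *v v) = (\<Sum>k\<in>UNIV. v $ k * (column k T \<bullet> (T *v v)))"
    by (simp add: matrix_mult_sum inner_sum_left scalar_mult_eq_scaleR)
  also have "\<dots> = 0"
    by (rule sum.neutral) (use supp orth in auto)
  finally have "T *v v = T *v 0" by simp
  thus ?thesis using inj by (metis injD)
qed

lemma gram_inverse_on_exists:
  fixes T :: "real^'n^'m"
  assumes inj: "inj (\<lambda>x. T *v x)"
  shows "\<exists>S. gram_inverse_on T I S"
proof -
  define G where "G i k = column i T \<bullet> column k T" for i k
  define F where "F v = (\<chi> i. if i \<in> I then (\<Sum>k\<in>I. v $ k * G i k) else v $ i)" for v :: "real^'n"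
  have lin: "linear F"
    by (rule linearI) (auto simp: F_def vec_eq_iff sum.distrib sum_distrib_left algebra_simps)
  have "inj F"
    unfolding linear_injective_0[OF lin]
  proof (intro allI impI)
    fix v assume Fv: "F v = 0"
    have supp: "\<forall>k. k \<notin> I \<longrightarrow> v $ k = 0"
      using Fv by (auto simp: F_def vec_eq_iff split: if_splits)
    have "column i T \<bullet> (T *v v) = 0" if "i \<in> I" for i
    proof -
      have "column i T \<bullet> (T *v v) = (\<Sum>k\<in>I. v $ k * G i k)"
        unfolding column_inner_matrix_vector_mult G_def
        by (rule sum.mono_neutral_right) (use supp in auto)
      also have "\<dots> = F v $ i" using that by (simp add: F_def)
      finally show ?thesis using Fv by simp
    qed
    thus "v = 0" using eq_0_if_supported_and_orthogonal_columns[OF inj supp] by blast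
  qed
  hence "surj F" using lin by (simp add: linear_injective_imp_surjective)
  hence ex: "\<forall>j. \<exists>v. F v = axis j 1" by (metis surjD)
  define S where "S k j = (SOME v. F v = axis j 1) $ k" for k j
  have "gram_inverse_on T I S"
    unfolding gram_inverse_on_def
  proof (intro ballI)
    fix i j assume "i \<in> I" "j \<in> I"
    have "F (SOME v. F v = axis j 1) $ i = axis j 1 $ i"
      using ex by (metis (mono_tags) someI)
    thus "(\<Sum>k\<in>I. column i T \<bullet> column k T * S k j) = (if i = j then 1 else 0)"
      using \<open>i \<in> I\<close> by (simp add: F_def S_def G_def axis_def mult.commute)
  qed
  thus ?thesis by blast
qed

lemma gram_inverse_on_solves:
  fixes T :: "real^'n^'m"
  assumes inj: "inj (\<lambda>x. T *v x)"
    and S: "gram_inverse_on T I S"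
    and supp: "\<forall>k. k \<notin> I \<longrightarrow> v $ k = 0"
    and rhs: "\<forall>i\<in>I. column i T \<bullet> (T *v v) = b i"
    and "k \<in> I"
  shows "v $ k = (\<Sum>j\<in>I. S k j * b j)"
proof -
  define w where "w = (\<chi> k. if k \<in> I then (\<Sum>j\<in>I. S k j * b j) else 0)"
  have "column i T \<bullet> (T *v w) = b i" if "i \<in> I" for i
  proof -
    have "column i T \<bullet> (T *v w) = (\<Sum>k\<in>I. (\<Sum>j\<in>I. S k j * b j) * (column i T \<bullet> column k T))"
      unfolding column_inner_matrix_vector_mult
      by (rule sum.mono_neutral_cong_right) (auto simp: w_def)
    also have "\<dots> = (\<Sum>k\<in>I. \<Sum>j\<in>I. b j * ((column i T \<bullet> column k T) * S k j))"
      by (simp add: sum_distrib_left sum_distrib_right mult_ac)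
    also have "\<dots> = (\<Sum>j\<in>I. b j * (\<Sum>k\<in>I. (column i T \<bullet> column k T) * S k j))"
      by (subst sum.swap) (simp add: sum_distrib_left)
    also have "\<dots> = (\<Sum>j\<in>I. b j * (if i = j then 1 else 0))"
      using S that unfolding gram_inverse_on_def by (intro sum.cong) auto
    also have "\<dots> = b i" using that by (simp add: if_distrib cong: if_cong)
    finally show ?thesis .
  qed
  hence "v - w = 0"
    using rhs supp
    by (intro eq_0_if_supported_and_orthogonal_columns[OF inj, of I])
       (auto simp: w_def matrix_vector_mult_diff_distrib inner_diff_right)
  thus ?thesis using \<open>k \<in> I\<close> by (simp add: w_def)
qed

lemma diagonally_dominant_row_signed_sum_nonneg:
  fixes S :: "'a \<Rightarrow> 'a \<Rightarrow> real"
  assumes "finite I" "i \<in> I"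
    and dom: "S i i - (\<Sum>j\<in>I - {i}. \<bar>S i j\<bar>) \<ge> 0"
    and "\<forall>j\<in>I. \<bar>s j\<bar> \<le> 1" and "\<bar>s i\<bar> = 1"
  shows "0 \<le> s i * (\<Sum>j\<in>I. S i j * s j)"
proof -
  have "s i * s i = 1" using \<open>\<bar>s i\<bar> = 1\<close> by (metis abs_mult_self_eq mult_1_right)
  hence "s i * (\<Sum>j\<in>I. S i j * s j) = S i i + (\<Sum>j\<in>I - {i}. S i j * (s i * s j))"
    using sum.remove[OF assms(1,2), of "\<lambda>j. S i j * (s i * s j)"]
    by (simp add: sum_distrib_left mult_ac)
  moreover have "- \<bar>S i j\<bar> \<le> S i j * (s i * s j)" if "j \<in> I" for j
  proof -
    have "\<bar>S i j * (s i * s j)\<bar> \<le> \<bar>S i j\<bar>"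
      using assms(4) that \<open>\<bar>s i\<bar> = 1\<close> by (simp add: abs_mult mult_left_le)
    thus ?thesis by linarith
  qed
  hence "(\<Sum>j\<in>I - {i}. - \<bar>S i j\<bar>) \<le> (\<Sum>j\<in>I - {i}. S i j * (s i * s j))"
    by (intro sum_mono) auto
  hence "- (\<Sum>j\<in>I - {i}. \<bar>S i j\<bar>) \<le> (\<Sum>j\<in>I - {i}. S i j * (s i * s j))"
    by (simp add: sum_negf)
  ultimately show ?thesis using dom by linarith
qed

lemma lasso_obj_ge_norm:
  fixes T :: "real^'n^'m"
  assumes "lam > 0"
  shows "norm x \<le> lasso_obj T y lam x"
proof -
  have "norm x \<le> (\<Sum>i\<in>UNIV. \<bar>x $ i\<bar>)" by (rule norm_le_l1_cart)
  also have "\<dots> \<le> lasso_obj T y lam x" using assms by (simp add: lasso_obj_def)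
  finally show ?thesis .
qed

lemma lasso_obj_has_minimizer:
  fixes T :: "real^'n^'m"
  assumes "lam > 0"
  shows "\<exists>x. \<forall>z. lasso_obj T y lam x \<le> lasso_obj T y lam z"
proof -
  define R where "R = lasso_obj T y lam 0"
  have cont: "continuous_on (cball 0 R) (lasso_obj T y lam)"
    unfolding lasso_obj_def
    by (intro continuous_intros matrix_vector_mult_linear_continuous_on[THEN continuous_on_compose2]) auto
  have "R \<ge> 0" using lasso_obj_ge_norm[OF assms, of 0 T y] by (simp add: R_def)
  then obtain x where x: "x \<in> cball 0 R" "\<forall>z\<in>cball 0 R. lasso_obj T y lam x \<le> lasso_obj T y lam z"
    using continuous_attains_inf[OF compact_cball _ cont] by fastforce
  have "lasso_obj T y lam x \<le> lasso_obj T y lam z" for z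
  proof (cases "z \<in> cball 0 R")
    case False
    hence "R < lasso_obj T y lam z" using lasso_obj_ge_norm[OF assms, of z T y] by simp
    moreover have "lasso_obj T y lam x \<le> R" using x(2) \<open>R \<ge> 0\<close> by (auto simp: R_def)
    ultimately show ?thesis by linarith
  qed (use x in blast)
  thus ?thesis by blast
qed

lemma norm_midpoint_squared:
  fixes a b :: "'a::real_inner"
  shows "(norm ((1/2) *\<^sub>R (a + b)))\<^sup>2 = ((norm a)\<^sup>2 + (norm b)\<^sup>2) / 2 - (norm (a - b))\<^sup>2 / 4"
  by (simp add: power2_norm_eq_inner inner_add_left inner_add_right inner_diff_left
      inner_diff_right inner_commute algebra_simps) (simp add: field_simps)

text \<open>At the midpoint of two minimisers the objective lies \<open>\<lambda>/8 \<parallel>T(x\<^sub>1 - x\<^sub>2)\<parallel>\<^sup>2\<close> below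
  their average, so injectivity of \<open>T\<close> forces \<open>x\<^sub>1 = x\<^sub>2\<close>.\<close>
lemma lasso_obj_minimizer_unique:
  fixes T :: "real^'n^'m"
  assumes "lam > 0" and inj: "inj (\<lambda>x. T *v x)"
    and min1: "\<forall>z. lasso_obj T y lam x1 \<le> lasso_obj T y lam z"
    and min2: "\<forall>z. lasso_obj T y lam x2 \<le> lasso_obj T y lam z"
  shows "x1 = x2"
proof -
  define a where "a = T *v x1 - y"
  define b where "b = T *v x2 - y"
  define m where "m = (1/2) *\<^sub>R (x1 + x2)"
  have Tm: "T *v m - y = (1/2) *\<^sub>R (a + b)"
  proof -
    have "(1/2) *\<^sub>R (a + b) = (1/2) *\<^sub>R (T *v x1 + T *v x2) - (1/2) *\<^sub>R (y + y)"
      by (simp add: a_def b_def scaleR_diff_right flip: scaleR_add_right)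
    also have "(1/2) *\<^sub>R (y + y) = y" by (simp flip: scaleR_2)
    finally show ?thesis by (simp add: m_def matrix_vector_mult_scaleR matrix_vector_right_distrib)
  qed
  have l1: "(\<Sum>i\<in>UNIV. \<bar>m $ i\<bar>) \<le> ((\<Sum>i\<in>UNIV. \<bar>x1 $ i\<bar>) + (\<Sum>i\<in>UNIV. \<bar>x2 $ i\<bar>)) / 2"
  proof -
    have "(\<Sum>i\<in>UNIV. \<bar>m $ i\<bar>) \<le> (\<Sum>i\<in>UNIV. (\<bar>x1 $ i\<bar> + \<bar>x2 $ i\<bar>) / 2)"
      by (rule sum_mono) (simp add: m_def abs_triangle_ineq[THEN order_trans] divide_right_mono
           flip: add_divide_distrib)
    thus ?thesis by (simp add: sum.distrib flip: sum_divide_distrib)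
  qed
  have "lasso_obj T y lam m \<le> (lasso_obj T y lam x1 + lasso_obj T y lam x2) / 2 - lam / 8 * (norm (a - b))\<^sup>2"
    using l1 unfolding lasso_obj_def Tm norm_midpoint_squared a_def[symmetric] b_def[symmetric]
    by (simp add: algebra_simps add_divide_distrib)
  moreover have "lasso_obj T y lam x1 \<le> lasso_obj T y lam m" "lasso_obj T y lam x2 \<le> lasso_obj T y lam m"
    using min1 min2 by auto
  ultimately have "lam / 8 * (norm (a - b))\<^sup>2 \<le> 0" by argo
  hence "T *v (x1 - x2) = T *v 0"
    using \<open>lam > 0\<close> by (simp add: mult_le_0_iff a_def b_def matrix_vector_mult_diff_distrib)
  thus ?thesis using inj by (metis injD right_minus_eq)
qed

lemma lasso_min_minimizes:
  fixes T :: "real^'n^'m"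
  assumes "lam > 0" and "inj (\<lambda>x. T *v x)"
  shows "\<forall>z. lasso_obj T y lam (lasso_min T y lam) \<le> lasso_obj T y lam z"
proof -
  have "\<exists>!x. \<forall>z. lasso_obj T y lam x \<le> lasso_obj T y lam z"
    using lasso_obj_has_minimizer[OF assms(1)] lasso_obj_minimizer_unique[OF assms] by blast
  thus ?thesis unfolding lasso_min_def by (rule theI')
qed

lemma linear_coeff_eq_0_if_quadratic_nonneg_near_0:
  fixes A B d :: real
  assumes "d > 0" "B \<ge> 0" "\<forall>t. \<bar>t\<bar> < d \<longrightarrow> 0 \<le> A * t + B * t\<^sup>2"
  shows "A = 0"
proof (rule ccontr)
  assume "A \<noteq> 0"
  define e where "e = min (d/2) (\<bar>A\<bar> / (2*B+1))"
  have e0: "e > 0" using \<open>A \<noteq> 0\<close> assms by (simp add: e_def)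
  have "e \<le> \<bar>A\<bar> / (2*B+1)" by (simp add: e_def)
  hence "e * (2*B+1) \<le> \<bar>A\<bar>" using assms by (simp add: field_simps)
  hence Be: "B * e < \<bar>A\<bar>" using e0 assms by (simp add: algebra_simps)
  define t where "t = - sgn A * e"
  have "\<bar>t\<bar> < d" using e0 \<open>A \<noteq> 0\<close> assms by (simp add: t_def abs_mult e_def)
  hence "0 \<le> A * t + B * t\<^sup>2" using assms by blast
  moreover have "A * t + B * t\<^sup>2 = e * (B * e - \<bar>A\<bar>)"
    using \<open>A \<noteq> 0\<close> by (cases "A > 0") (auto simp: t_def power2_eq_square algebra_simps)
  moreover have "e * (B * e - \<bar>A\<bar>) < 0" using e0 Be by (simp add: mult_pos_neg)
  ultimately show False by linarith
qed

text \<open>Along the \<open>i\<close>-th coordinate axis near a minimiser with \<open>x\<^sub>i \<noteq> 0\<close>, the objective is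
  a quadratic polynomial in the step, and its linear coefficient must vanish.\<close>
lemma lasso_minimizer_stationary:
  fixes T :: "real^'n^'m"
  assumes "lam > 0" and min: "\<forall>z. lasso_obj T y lam x \<le> lasso_obj T y lam z"
    and nz: "x $ i \<noteq> 0"
  shows "lam * (column i T \<bullet> (y - T *v x)) = sgn (x $ i)"
proof -
  define c where "c = column i T"
  define r where "r = T *v x - y"
  define s where "s = sgn (x $ i)"
  define A where "A = lam * (r \<bullet> c) + s"
  define B where "B = lam / 2 * (norm c)\<^sup>2"
  have step: "lasso_obj T y lam (x + t *\<^sub>R axis i 1) = lasso_obj T y lam x + (A * t + B * t\<^sup>2)"
    if "\<bar>t\<bar> < \<bar>x $ i\<bar>" for t
  proof -
    have Tz: "T *v (x + t *\<^sub>R axis i 1) - y = r + t *\<^sub>R c"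
      by (simp add: r_def c_def matrix_vector_right_distrib matrix_vector_mult_scaleR
          matrix_vector_mult_basis algebra_simps)
    have nsq: "(norm (r + t *\<^sub>R c))\<^sup>2 = (norm r)\<^sup>2 + 2 * t * (r \<bullet> c) + t\<^sup>2 * (norm c)\<^sup>2"
      by (simp add: power2_norm_eq_inner inner_add_left inner_add_right inner_commute
          algebra_simps) (simp add: power2_eq_square algebra_simps)
    have "\<bar>x $ i + t\<bar> = \<bar>x $ i\<bar> + s * t"
      using that nz by (cases "x $ i > 0") (auto simp: s_def)
    hence "(\<Sum>j\<in>UNIV. \<bar>(x + t *\<^sub>R axis i 1) $ j\<bar>) = (\<Sum>j\<in>UNIV. \<bar>x $ j\<bar> + (if j = i then s * t else 0))"
      by (intro sum.cong) (auto simp: axis_def)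
    hence l1: "(\<Sum>j\<in>UNIV. \<bar>(x + t *\<^sub>R axis i 1) $ j\<bar>) = (\<Sum>j\<in>UNIV. \<bar>x $ j\<bar>) + s * t"
      by (simp add: sum.distrib)
    show ?thesis
      unfolding lasso_obj_def Tz l1 nsq r_def[symmetric]
      by (simp add: A_def B_def algebra_simps)
  qed
  have "\<forall>t. \<bar>t\<bar> < \<bar>x $ i\<bar> \<longrightarrow> 0 \<le> A * t + B * t\<^sup>2"
    using step min by (metis le_add_same_cancel1)
  moreover have "B \<ge> 0" using \<open>lam > 0\<close> by (simp add: B_def)
  ultimately have "A = 0" using nz by (intro linear_coeff_eq_0_if_quadratic_nonneg_near_0) auto
  thus ?thesis
    by (simp add: A_def r_def c_def s_def inner_diff_right inner_diff_left inner_commute algebra_simps)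
qed

lemma lasso_xi_component:
  fixes T :: "real^'n^'m"
  shows "lasso_xi T y lam $ i = lam * (column i T \<bullet> (y - T *v lasso_min T y lam))"
  by (simp only: lasso_xi_def vector_scaleR_component transpose_matrix_vector_mult_component) simp

lemma lasso_xi_eq_sgn:
  fixes T :: "real^'n^'m"
  assumes "lam > 0" and "inj (\<lambda>x. T *v x)" and "lasso_min T y lam $ i \<noteq> 0"
  shows "lasso_xi T y lam $ i = sgn (lasso_min T y lam $ i)"
  using lasso_minimizer_stationary[OF assms(1) lasso_min_minimizes[OF assms(1,2)] assms(3)]
  by (simp add: lasso_xi_component)

lemma lasso_min_diff_normal_equation:
  fixes T :: "real^'n^'m"
  assumes inj: "inj (\<lambda>x. T *v x)" and "0 < mu" "mu < lam"
    and nz: "lasso_min T y lam $ i \<noteq> 0"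
    and xi_eq: "lasso_xi T y lam $ i = lasso_xi T y mu $ i"
  shows "column i T \<bullet> (T *v (lasso_min T y lam - lasso_min T y mu))
           = (1/mu - 1/lam) * sgn (lasso_min T y lam $ i)"
proof -
  define xl xm s where "xl = lasso_min T y lam" and "xm = lasso_min T y mu"
    and "s = sgn (lasso_min T y lam $ i)"
  have "0 < lam" using assms(2,3) by linarith
  have "lasso_xi T y lam $ i = s" "lasso_xi T y mu $ i = s"
    using lasso_xi_eq_sgn[OF \<open>0 < lam\<close> inj nz] xi_eq by (simp_all add: s_def)
  hence "column i T \<bullet> (y - T *v xl) = s / lam" "column i T \<bullet> (y - T *v xm) = s / mu"
    using \<open>0 < lam\<close> \<open>0 < mu\<close> unfolding lasso_xi_component xl_def xm_def
    by (simp_all add: field_simps)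
  moreover have "column i T \<bullet> (T *v (xl - xm)) = column i T \<bullet> (y - T *v xm) - column i T \<bullet> (y - T *v xl)"
    by (simp add: matrix_vector_mult_diff_distrib inner_diff_right)
  ultimately show ?thesis
    by (simp add: xl_def xm_def s_def algebra_simps)
qed

theorem mainTheorem15:
  fixes T :: "real^'n^'m" and y :: "real^'m" and lam mu :: real
  assumes "inj (\<lambda>x. T *v x)"
    and "positive_cone_condition T"
    and "0 < mu" and "mu < lam"
    and "\<forall>i. lasso_min T y lam $ i = 0 \<longrightarrow> lasso_min T y mu $ i = 0"
    and "\<forall>i. lasso_min T y lam $ i \<noteq> 0 \<longrightarrow> lasso_xi T y lam $ i = lasso_xi T y mu $ i"
  shows "\<forall>i. lasso_min T y lam $ i \<noteq> 0 \<longrightarrow>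
           lasso_min T y mu $ i * sgn (lasso_min T y lam $ i) \<le> \<bar>lasso_min T y lam $ i\<bar>"
proof (intro allI impI)
  fix i assume i: "lasso_min T y lam $ i \<noteq> 0"
  define xl xm where "xl = lasso_min T y lam" and "xm = lasso_min T y mu"
  define I s c where "I = {i. xl $ i \<noteq> 0}" and "s j = sgn (xl $ j)" and "c = 1/mu - 1/lam" for j
  have "0 < c" using assms(3,4) by (simp add: c_def field_simps)
  have normal_eq: "\<forall>j\<in>I. column j T \<bullet> (T *v (xl - xm)) = c * s j"
    using lasso_min_diff_normal_equation[OF assms(1,3,4)] assms(6)
    by (simp add: I_def s_def c_def xl_def xm_def)
  obtain S where S: "gram_inverse_on T I S" using gram_inverse_on_exists[OF assms(1)] by blast
  have "i \<in> I" using i by (simp add: I_def xl_def)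
  have supp: "\<forall>k. k \<notin> I \<longrightarrow> (xl - xm) $ k = 0"
    using assms(5) by (simp add: I_def xl_def xm_def)
  have "(xl - xm) $ i = (\<Sum>j\<in>I. S i j * (c * s j))"
    by (rule gram_inverse_on_solves[OF assms(1) S supp normal_eq \<open>i \<in> I\<close>])
  hence "s i * (xl - xm) $ i = c * (s i * (\<Sum>j\<in>I. S i j * s j))"
    by (simp add: sum_distrib_left mult_ac)
  moreover have "0 \<le> s i * (\<Sum>j\<in>I. S i j * s j)"
    using assms(2) S \<open>i \<in> I\<close> i unfolding positive_cone_condition_def
    by (intro diagonally_dominant_row_signed_sum_nonneg) (auto simp: s_def xl_def abs_sgn_eq)
  ultimately have "xm $ i * s i \<le> xl $ i * s i"
    using \<open>0 < c\<close> by (simp add: algebra_simps)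
  thus "xm $ i * sgn (xl $ i) \<le> \<bar>xl $ i\<bar>"
    using abs_sgn[of "xl $ i"] by (simp add: s_def)
qed

end
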